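(* Let $\mathcal{A}$ be a finite alphabet and let $P$, $Q$, $R$ be probability mass functions on $\mathcal{A}$. Let $p_{\min}=\min_{a\in\mathcal{A}}P(a)$, $p_{\max}=\max_{a\in\mathcal{A}}P(a)$, $r_{\min}=\min_{a\in\mathcal{A}}R(a)$, $r_{\max}=\max_{a\in\mathcal{A}}R(a)$, and $d_1=\sum_{a\in\mathcal{A}}|P(a)-Q(a)|$. If $d_1<2p_{\min}$, then \[ D(Q\|R)-D(P\|R)\le \frac{d_1}{2}\log_2\!\left(\frac{p_{\max}+d_1/2}{p_{\min}-d_1/2}\cdot\frac{r_{\max}}{r_{\min}}\right). \]
   Context: $D(P\|R)=\sum_{a: P(a)>0}P(a)\log_2\frac{P(a)}{R(a)}$ is the informational divergence (Kullback–Leibler divergence in bits). *)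

theory Defs
  imports Complex_Main
begin

definition is_pmf :: "('a::finite \<Rightarrow> real) \<Rightarrow> bool" where
  "is_pmf P \<longleftrightarrow> (\<forall>a. P a \<ge> 0) \<and> (\<Sum>a\<in>UNIV. P a) = 1"

definition divergence :: "('a::finite \<Rightarrow> real) \<Rightarrow> ('a \<Rightarrow> real) \<Rightarrow> real" where
  "divergence P R = (\<Sum>a\<in>{a. P a > 0}. P a * log 2 (P a / R a))"

end

theory Submission
  imports Defs
begin

text \<open>
  Since \<open>x \<mapsto> x log (x / r)\<close> is convex with derivative \<open>log (x / r) + 1 / ln 2\<close>,
  the difference \<open>D(Q\<parallel>R) - D(P\<parallel>R)\<close> is bounded by \<open>\<Sum>\<^sub>a (Q a - P a) log (Q a / R a)\<close>;
  the constant \<open>1 / ln 2\<close> drops out because \<open>Q - P\<close> sums to zero. A weight vector of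
  total mass zero pairs with any function of oscillation \<open>M - m\<close> to at most half its
  \<open>\<ell>\<^sub>1\<close>-norm times \<open>M - m\<close>. Finally every \<open>\<bar>P a - Q a\<bar>\<close> is at most \<open>d\<^sub>1 / 2\<close>, so
  \<open>Q a\<close> lies in \<open>[p\<^sub>m\<^sub>i\<^sub>n - d\<^sub>1/2, p\<^sub>m\<^sub>a\<^sub>x + d\<^sub>1/2]\<close>, which bounds the oscillation of
  \<open>log (Q a / R a)\<close> by the logarithm in the statement.
\<close>

lemma abs_le_half_sum_abs_if_sum_eq_0:
  fixes d :: "'a::finite \<Rightarrow> real"
  assumes "(\<Sum>a\<in>UNIV. d a) = 0"
  shows "\<bar>d b\<bar> \<le> (\<Sum>a\<in>UNIV. \<bar>d a\<bar>) / 2"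
proof -
  have "(\<Sum>a\<in>UNIV. d a) = d b + (\<Sum>a\<in>UNIV - {b}. d a)"
    and "(\<Sum>a\<in>UNIV. \<bar>d a\<bar>) = \<bar>d b\<bar> + (\<Sum>a\<in>UNIV - {b}. \<bar>d a\<bar>)"
    by (simp_all add: sum.remove)
  moreover have "\<bar>\<Sum>a\<in>UNIV - {b}. d a\<bar> \<le> (\<Sum>a\<in>UNIV - {b}. \<bar>d a\<bar>)"
    by (rule sum_abs)
  ultimately show ?thesis using assms by linarith
qed

lemma sum_mult_le_half_sum_abs_if_sum_eq_0:
  fixes w g :: "'a::finite \<Rightarrow> real"
  assumes "(\<Sum>a\<in>UNIV. w a) = 0" and "\<And>a. m \<le> g a" and "\<And>a. g a \<le> M"
  shows "(\<Sum>a\<in>UNIV. w a * g a) \<le> (\<Sum>a\<in>UNIV. \<bar>w a\<bar>) / 2 * (M - m)"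
proof -
  let ?c = "(M + m) / 2"
  have "(\<Sum>a\<in>UNIV. w a * (g a - ?c)) = (\<Sum>a\<in>UNIV. w a * g a) - (\<Sum>a\<in>UNIV. w a) * ?c"
    by (simp add: right_diff_distrib sum_subtractf sum_distrib_right)
  then have "(\<Sum>a\<in>UNIV. w a * g a) = (\<Sum>a\<in>UNIV. w a * (g a - ?c))"
    using assms(1) by simp
  also have "\<dots> \<le> (\<Sum>a\<in>UNIV. \<bar>w a\<bar> * ((M - m) / 2))"
  proof (rule sum_mono)
    fix a
    have "\<bar>g a - ?c\<bar> \<le> (M - m) / 2"
      using assms(2,3)[of a] by (auto simp: abs_le_iff field_simps)
    then have "\<bar>w a\<bar> * \<bar>g a - ?c\<bar> \<le> \<bar>w a\<bar> * ((M - m) / 2)"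
      by (rule mult_left_mono) simp
    then show "w a * (g a - ?c) \<le> \<bar>w a\<bar> * ((M - m) / 2)"
      by (metis abs_ge_self abs_mult order_trans)
  qed
  also have "\<dots> = (\<Sum>a\<in>UNIV. \<bar>w a\<bar>) / 2 * (M - m)"
    by (simp add: sum_distrib_right)
  finally show ?thesis .
qed

lemma mult_log_ratio_diff_le:
  fixes p q r b :: real
  assumes "p > 0" "q > 0" "r > 0" "b > 1"
  shows "q * log b (q / r) - p * log b (p / r) \<le> (q - p) * (log b (q / r) + 1 / ln b)"
proof -
  have "ln (q / p) \<le> q / p - 1"
    using assms by (intro ln_le_minus_one) auto
  then have "p * ln (q / p) \<le> q - p"
    using assms(1) mult_left_mono[of "ln (q / p)" "q / p - 1" p] by (simp add: field_simps)
  moreover have "p * log b (q / r) - p * log b (p / r) = p * ln (q / p) / ln b"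
    using assms by (simp add: log_def ln_div field_simps)
  moreover have "ln b > 0"
    using assms(4) by simp
  ultimately show ?thesis
    by (simp add: field_simps)
qed

lemma divergence_eq_sum_if_pos:
  assumes "\<And>a. P a > 0"
  shows "divergence P R = (\<Sum>a\<in>UNIV. P a * log 2 (P a / R a))"
  using assms unfolding divergence_def by simp

lemma divergence_diff_le:
  fixes P Q R :: "'a::finite \<Rightarrow> real"
  assumes "is_pmf P" "is_pmf Q" "\<And>a. P a > 0" "\<And>a. Q a > 0" "\<And>a. R a > 0"
  shows "divergence Q R - divergence P R \<le> (\<Sum>a\<in>UNIV. (Q a - P a) * log 2 (Q a / R a))"
proof -
  have mass_zero: "(\<Sum>a\<in>UNIV. Q a - P a) = 0"
    using assms(1,2) by (simp add: is_pmf_def sum_subtractf)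
  have "divergence Q R - divergence P R
      = (\<Sum>a\<in>UNIV. Q a * log 2 (Q a / R a) - P a * log 2 (P a / R a))"
    using assms(3,4) by (simp add: divergence_eq_sum_if_pos sum_subtractf)
  also have "\<dots> \<le> (\<Sum>a\<in>UNIV. (Q a - P a) * (log 2 (Q a / R a) + 1 / ln 2))"
    using assms(3-5) by (intro sum_mono mult_log_ratio_diff_le) auto
  also have "\<dots> = (\<Sum>a\<in>UNIV. (Q a - P a) * log 2 (Q a / R a))
      + (\<Sum>a\<in>UNIV. Q a - P a) / ln 2"
    by (simp add: distrib_left sum.distrib sum_divide_distrib)
  finally show ?thesis
    using mass_zero by simp
qed

lemma pmf_bounds_by_l1_dist:
  fixes P Q :: "'a::finite \<Rightarrow> real"
  assumes "is_pmf P" "is_pmf Q"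
  defines "d \<equiv> \<Sum>a\<in>UNIV. \<bar>P a - Q a\<bar>"
  shows "Min (range P) - d / 2 \<le> Q a" and "Q a \<le> Max (range P) + d / 2"
proof -
  have "(\<Sum>a\<in>UNIV. P a - Q a) = 0"
    using assms(1,2) by (simp add: is_pmf_def sum_subtractf)
  then have "\<bar>P a - Q a\<bar> \<le> d / 2"
    unfolding d_def by (rule abs_le_half_sum_abs_if_sum_eq_0)
  moreover have "Min (range P) \<le> P a" "P a \<le> Max (range P)"
    by simp_all
  ultimately show "Min (range P) - d / 2 \<le> Q a" "Q a \<le> Max (range P) + d / 2"
    by linarith+
qed

lemma divergence_diff_le_by_bounds:
  fixes P Q R :: "'a::finite \<Rightarrow> real"
  assumes "is_pmf P" "is_pmf Q" "\<And>a. P a > 0"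
    and "0 < q\<^sub>l\<^sub>o" "\<And>a. q\<^sub>l\<^sub>o \<le> Q a" "\<And>a. Q a \<le> q\<^sub>h\<^sub>i"
    and "0 < r\<^sub>l\<^sub>o" "\<And>a. r\<^sub>l\<^sub>o \<le> R a" "\<And>a. R a \<le> r\<^sub>h\<^sub>i"
  shows "divergence Q R - divergence P R
    \<le> (\<Sum>a\<in>UNIV. \<bar>Q a - P a\<bar>) / 2 * log 2 (q\<^sub>h\<^sub>i / q\<^sub>l\<^sub>o * (r\<^sub>h\<^sub>i / r\<^sub>l\<^sub>o))"
proof -
  have Q_pos: "Q a > 0" and R_pos: "R a > 0" for a
    using assms(4,5,7,8) by (auto intro: less_le_trans)
  have q\<^sub>h\<^sub>i_pos: "q\<^sub>h\<^sub>i > 0"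
    using Q_pos assms(6) by (rule less_le_trans)
  have r\<^sub>h\<^sub>i_pos: "r\<^sub>h\<^sub>i > 0"
    using R_pos assms(9) by (rule less_le_trans)
  have log_ratio_bounds: "log 2 (q\<^sub>l\<^sub>o / r\<^sub>h\<^sub>i) \<le> log 2 (Q a / R a)"
    "log 2 (Q a / R a) \<le> log 2 (q\<^sub>h\<^sub>i / r\<^sub>l\<^sub>o)" for a
  proof -
    have "q\<^sub>l\<^sub>o / r\<^sub>h\<^sub>i \<le> Q a / R a" "Q a / R a \<le> q\<^sub>h\<^sub>i / r\<^sub>l\<^sub>o"
      using frac_le[OF less_imp_le[OF Q_pos] assms(5) R_pos assms(9)]
        frac_le[OF less_imp_le[OF q\<^sub>h\<^sub>i_pos] assms(6) assms(7,8)] .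
    then show "log 2 (q\<^sub>l\<^sub>o / r\<^sub>h\<^sub>i) \<le> log 2 (Q a / R a)"
      "log 2 (Q a / R a) \<le> log 2 (q\<^sub>h\<^sub>i / r\<^sub>l\<^sub>o)"
      using assms(4,7) q\<^sub>h\<^sub>i_pos r\<^sub>h\<^sub>i_pos Q_pos[of a] R_pos[of a] by simp_all
  qed
  have "divergence Q R - divergence P R \<le> (\<Sum>a\<in>UNIV. (Q a - P a) * log 2 (Q a / R a))"
    using assms(1-3) Q_pos R_pos by (rule divergence_diff_le)
  also have "\<dots> \<le> (\<Sum>a\<in>UNIV. \<bar>Q a - P a\<bar>) / 2 *
      (log 2 (q\<^sub>h\<^sub>i / r\<^sub>l\<^sub>o) - log 2 (q\<^sub>l\<^sub>o / r\<^sub>h\<^sub>i))"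
    using assms(1,2) log_ratio_bounds
    by (intro sum_mult_le_half_sum_abs_if_sum_eq_0) (auto simp: is_pmf_def sum_subtractf)
  also have "log 2 (q\<^sub>h\<^sub>i / r\<^sub>l\<^sub>o) - log 2 (q\<^sub>l\<^sub>o / r\<^sub>h\<^sub>i) = log 2 (q\<^sub>h\<^sub>i / q\<^sub>l\<^sub>o * (r\<^sub>h\<^sub>i / r\<^sub>l\<^sub>o))"
    using assms(4,7) q\<^sub>h\<^sub>i_pos r\<^sub>h\<^sub>i_pos by (simp add: log_divide log_mult)
  finally show ?thesis .
qed

theorem lemma1:
  fixes P Q R :: "'a::finite \<Rightarrow> real"
  assumes "is_pmf P" and "is_pmf Q" and "is_pmf R"
    and "\<forall>a. R a > 0"
    and "(\<Sum>a\<in>UNIV. \<bar>P a - Q a\<bar>) < 2 * Min (range P)"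
  shows "divergence Q R - divergence P R
    \<le> (\<Sum>a\<in>UNIV. \<bar>P a - Q a\<bar>) / 2 *
       log 2 ((Max (range P) + (\<Sum>a\<in>UNIV. \<bar>P a - Q a\<bar>) / 2)
              / (Min (range P) - (\<Sum>a\<in>UNIV. \<bar>P a - Q a\<bar>) / 2)
              * (Max (range R) / Min (range R)))"
proof -
  define d where "d = (\<Sum>a\<in>UNIV. \<bar>P a - Q a\<bar>)"
  have d_bounds: "0 \<le> d" "d < 2 * Min (range P)"
    using assms(5) by (simp_all add: d_def sum_nonneg)
  have P_min: "Min (range P) \<le> P a" for a
    by simp
  have "P a > 0" for a
    using d_bounds P_min[of a] by linarith
  moreover have "Min (range P) - d / 2 > 0"
    using d_bounds by linarith
  moreover have "Min (range P) - d / 2 \<le> Q a" "Q a \<le> Max (range P) + d / 2" for a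
    unfolding d_def using pmf_bounds_by_l1_dist[OF assms(1,2)] by auto
  moreover have "0 < Min (range R)" "Min (range R) \<le> R a" "R a \<le> Max (range R)" for a
    using assms(4) by simp_all
  ultimately have "divergence Q R - divergence P R \<le> (\<Sum>a\<in>UNIV. \<bar>Q a - P a\<bar>) / 2
      * log 2 ((Max (range P) + d / 2) / (Min (range P) - d / 2) * (Max (range R) / Min (range R)))"
    using assms(1,2) by (intro divergence_diff_le_by_bounds)
  then show ?thesis
    by (simp add: d_def abs_minus_commute)
qed

end
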